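(* Let $G$ be a finite non-abelian group satisfying condition (Con). Then the isoperimetric number of $\mathcal C_G$ satisfies $$\frac{|Z(G)|}{2}\le i(\mathcal C_G)\le \sqrt{|Z(G)|\big(2(|G|-1)-|Z(G)|\big)}.$$
   Context: For a finite group $G$, the commuting graph $\mathcal C_G$ is the simple undirected graph with vertex set $G$ in which distinct $u,v\in G$ are adjacent iff $uv=vu$. $Z(G)$ is the center of $G$ and $C(v)=\{w\in G: wv=vw\}$ the centralizer of $v$. Condition (Con): for all $u,v\in G\setminus Z(G)$, either $C(u)=C(v)$ or $C(u)\cap C(v)=Z(G)$. For a graph $\Gamma$ with vertex set $V$, $\partial S$ is the set of edges with exactly one endpoint in $S$, and the isoperimetric number is $i(\Gamma)=\min\{|\partial S|/|S|: S\subseteq V,\ 0<|S|\le |V|/2\}$. *)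

theory Defs
  imports "HOL-Algebra.Group" Complex_Main
begin

definition grp_center :: "('a, 'b) monoid_scheme \<Rightarrow> 'a set" where
  "grp_center G = {z \<in> carrier G. \<forall>g \<in> carrier G. z \<otimes>\<^bsub>G\<^esub> g = g \<otimes>\<^bsub>G\<^esub> z}"

definition grp_centralizer :: "('a, 'b) monoid_scheme \<Rightarrow> 'a \<Rightarrow> 'a set" where
  "grp_centralizer G v = {w \<in> carrier G. w \<otimes>\<^bsub>G\<^esub> v = v \<otimes>\<^bsub>G\<^esub> w}"

definition con_condition :: "('a, 'b) monoid_scheme \<Rightarrow> bool" where
  "con_condition G \<longleftrightarrow>
     (\<forall>u \<in> carrier G - grp_center G. \<forall>v \<in> carrier G - grp_center G.
        grp_centralizer G u = grp_centralizer G v \<or>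
        grp_centralizer G u \<inter> grp_centralizer G v = grp_center G)"

definition commuting_graph_edges :: "('a, 'b) monoid_scheme \<Rightarrow> 'a set set" where
  "commuting_graph_edges G =
     {{u, v} | u v. u \<in> carrier G \<and> v \<in> carrier G \<and> u \<noteq> v \<and>
                    u \<otimes>\<^bsub>G\<^esub> v = v \<otimes>\<^bsub>G\<^esub> u}"

definition edge_boundary :: "'a set set \<Rightarrow> 'a set \<Rightarrow> 'a set set" where
  "edge_boundary E S = {e \<in> E. card (e \<inter> S) = 1}"

definition isoperimetric_number :: "'a set \<Rightarrow> 'a set set \<Rightarrow> real" where
  "isoperimetric_number V E =
     Min {real (card (edge_boundary E S)) / real (card S) | S.
            S \<subseteq> V \<and> 0 < card S \<and> real (card S) \<le> real (card V) / 2}"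

end

theory Submission
  imports Defs "HOL-Algebra.Coset"
begin

text \<open>
  Central elements commute with everything, so a set S of vertices has at least
  |S \<inter> Z| (|G| - |S|) + |S - Z| |Z - S| boundary edges; for |S| \<le> |G|/2 an elementary
  estimate turns this into |\<partial>S| \<ge> |Z| |S| / 2.  For the upper bound take S = C(u) - Z
  with u non-central: by (Con), every non-central element commuting with an element
  of S lies in S, so all boundary edges of S end in Z and |\<partial>S| \<le> |S| |Z|; moreover
  |S| \<le> |G|/2 by Lagrange, since C(u) is a proper subgroup.  Finally
  |Z| \<le> sqrt (|Z| (2(|G| - 1) - |Z|)) because |Z| \<le> |G| - 1.
\<close>

lemma grp_center_subset_carrier: "grp_center G \<subseteq> carrier G"
  by (auto simp: grp_center_def)

lemma grp_centralizer_subset_carrier: "grp_centralizer G u \<subseteq> carrier G"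
  by (auto simp: grp_centralizer_def)

lemma subgroup_grp_centralizer:
  fixes G (structure)
  assumes "group G" and "u \<in> carrier G"
  shows "subgroup (grp_centralizer G u) G"
proof -
  interpret group G by fact
  show ?thesis
  proof (rule subgroupI)
    show "grp_centralizer G u \<subseteq> carrier G" by (rule grp_centralizer_subset_carrier)
    show "grp_centralizer G u \<noteq> {}"
      using assms by (auto simp: grp_centralizer_def intro!: exI[of _ \<one>])
  next
    fix a assume "a \<in> grp_centralizer G u"
    hence a: "a \<in> carrier G" and au: "a \<otimes> u = u \<otimes> a" by (auto simp: grp_centralizer_def)
    have "inv a \<otimes> u = inv a \<otimes> (u \<otimes> a) \<otimes> inv a" using a assms by (simp add: m_assoc)
    also have "\<dots> = inv a \<otimes> (a \<otimes> u) \<otimes> inv a" by (simp add: au)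
    also have "\<dots> = u \<otimes> inv a" using a assms by (simp add: m_assoc[symmetric])
    finally show "inv a \<in> grp_centralizer G u" using a by (simp add: grp_centralizer_def)
  next
    fix a b assume "a \<in> grp_centralizer G u" "b \<in> grp_centralizer G u"
    hence ab: "a \<in> carrier G" "b \<in> carrier G" and au: "a \<otimes> u = u \<otimes> a" and bu: "b \<otimes> u = u \<otimes> b"
      by (auto simp: grp_centralizer_def)
    have "a \<otimes> b \<otimes> u = a \<otimes> (u \<otimes> b)" using ab assms by (simp add: m_assoc bu)
    also have "\<dots> = u \<otimes> (a \<otimes> b)" using ab assms by (simp add: m_assoc[symmetric] au)
    finally have "a \<otimes> b \<otimes> u = u \<otimes> (a \<otimes> b)" .
    thus "a \<otimes> b \<in> grp_centralizer G u" using ab by (simp add: grp_centralizer_def)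
  qed
qed

lemma grp_centralizer_neq_carrier:
  assumes "u \<in> carrier G - grp_center G"
  shows "grp_centralizer G u \<noteq> carrier G"
proof
  assume all: "grp_centralizer G u = carrier G"
  have "u \<otimes>\<^bsub>G\<^esub> g = g \<otimes>\<^bsub>G\<^esub> u" if "g \<in> carrier G" for g
  proof -
    have "g \<in> grp_centralizer G u" using that all by simp
    thus ?thesis by (simp add: grp_centralizer_def)
  qed
  thus False using assms by (auto simp: grp_center_def)
qed

lemma card_grp_centralizer_le_half:
  assumes "group G" "finite (carrier G)" "u \<in> carrier G - grp_center G"
  shows "2 * card (grp_centralizer G u) \<le> card (carrier G)"
proof -
  interpret group G by fact
  have "subgroup (grp_centralizer G u) G"
    using subgroup_grp_centralizer[OF assms(1)] assms(3) by blast
  then obtain k where k: "k * card (grp_centralizer G u) = card (carrier G)"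
    using lagrange unfolding order_def by blast
  have "grp_centralizer G u \<subset> carrier G"
    using grp_centralizer_subset_carrier[of G u] grp_centralizer_neq_carrier[OF assms(3)] by blast
  hence lt: "card (grp_centralizer G u) < card (carrier G)"
    by (rule psubset_card_mono[OF assms(2)])
  have "k \<noteq> 0" using k lt by (cases "k = 0") simp_all
  moreover have "k \<noteq> 1" using k lt by (cases "k = 1") simp_all
  ultimately have "2 \<le> k" by linarith
  hence "2 * card (grp_centralizer G u) \<le> k * card (grp_centralizer G u)" by (rule mult_le_mono1)
  thus ?thesis using k by simp
qed

lemma card_grp_centralizer_diff_center:
  assumes "group G" "finite (carrier G)" "u \<in> carrier G - grp_center G"
  shows "0 < card (grp_centralizer G u - grp_center G)"
    and "real (card (grp_centralizer G u - grp_center G)) \<le> real (card (carrier G)) / 2"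
proof -
  have fin: "finite (grp_centralizer G u)"
    using assms(2) grp_centralizer_subset_carrier[of G u] by (rule finite_subset[rotated])
  moreover have "u \<in> grp_centralizer G u - grp_center G"
    using assms(3) by (simp add: grp_centralizer_def)
  ultimately show "0 < card (grp_centralizer G u - grp_center G)"
    by (auto simp: card_gt_0_iff)
  have "card (grp_centralizer G u - grp_center G) \<le> card (grp_centralizer G u)"
    using fin by (rule card_mono) auto
  thus "real (card (grp_centralizer G u - grp_center G)) \<le> real (card (carrier G)) / 2"
    using card_grp_centralizer_le_half[OF assms] by simp
qed

lemma grp_center_psubset_carrier:
  assumes "group G" "\<not> comm_group G"
  shows "grp_center G \<subset> carrier G"
proof -
  interpret group G by fact
  have "grp_center G \<noteq> carrier G"
  proof
    assume "grp_center G = carrier G"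
    hence "comm_group G" by (intro group_comm_groupI) (auto simp: grp_center_def)
    thus False using assms(2) by blast
  qed
  thus ?thesis using grp_center_subset_carrier[of G] by blast
qed

lemma finite_commuting_graph_edges:
  assumes "finite (carrier G)"
  shows "finite (commuting_graph_edges G)"
proof -
  have "commuting_graph_edges G \<subseteq> Pow (carrier G)"
    by (auto simp: commuting_graph_edges_def)
  thus ?thesis using assms by (simp add: finite_subset)
qed

lemma commuting_graph_edge_grp_center:
  assumes "x \<in> grp_center G" "y \<in> carrier G" "x \<noteq> y"
  shows "{x, y} \<in> commuting_graph_edges G" "{y, x} \<in> commuting_graph_edges G"
  using assms unfolding commuting_graph_edges_def grp_center_def by blast+

lemma card_edge_boundary_ge:
  assumes "finite (carrier G)" "S \<subseteq> carrier G"
  shows "card (S \<inter> grp_center G) * card (carrier G - S) + card (S - grp_center G) * card (grp_center G - S)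
         \<le> card (edge_boundary (commuting_graph_edges G) S)"
proof -
  let ?Z = "grp_center G" and ?V = "carrier G"
  define P where "P = (S \<inter> ?Z) \<times> (?V - S) \<union> (S - ?Z) \<times> (?Z - S)"
  have "finite S" "finite ?Z"
    using assms grp_center_subset_carrier[of G] finite_subset by blast+
  hence card_P: "card P = card (S \<inter> ?Z) * card (?V - S) + card (S - ?Z) * card (?Z - S)"
    unfolding P_def using assms(1)
    by (subst card_Un_disjoint) (auto simp: card_cartesian_product)
  have "card P = card ((\<lambda>(x, y). {x, y}) ` P)"
    by (rule card_image[symmetric]) (auto simp: P_def inj_on_def doubleton_eq_iff)
  also have "\<dots> \<le> card (edge_boundary (commuting_graph_edges G) S)"
  proof (rule card_mono)
    show "finite (edge_boundary (commuting_graph_edges G) S)"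
      using finite_commuting_graph_edges[OF assms(1)] by (simp add: edge_boundary_def)
    show "(\<lambda>(x, y). {x, y}) ` P \<subseteq> edge_boundary (commuting_graph_edges G) S"
    proof clarify
      fix x y assume xy: "(x, y) \<in> P"
      hence x: "x \<in> S" and y: "y \<in> ?V - S" using grp_center_subset_carrier[of G] by (auto simp: P_def)
      have "x \<in> grp_center G \<or> y \<in> grp_center G" using xy by (auto simp: P_def)
      hence "{x, y} \<in> commuting_graph_edges G"
        using x y assms(2) commuting_graph_edge_grp_center[of x G y] commuting_graph_edge_grp_center[of y G x]
        by blast
      moreover have "{x, y} \<inter> S = {x}" using x y by auto
      ultimately show "{x, y} \<in> edge_boundary (commuting_graph_edges G) S"
        by (simp add: edge_boundary_def)
    qed
  qed
  finally show ?thesis using card_P by simp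
qed

text \<open>
  With a = |S \<inter> Z|, b = |S - Z|, z = |Z|, n = |G| this is the estimate behind the lower
  bound; split according to whether S contains more or less than half of Z.
\<close>
lemma half_center_le_cut_count:
  fixes a b z n :: real
  assumes "0 \<le> a" "0 \<le> b" "a \<le> z" "z \<le> n" "2 * (a + b) \<le> n"
  shows "z * (a + b) / 2 \<le> a * (n - (a + b)) + b * (z - a)"
proof (cases "2 * a \<le> z")
  case True
  have "b * z \<le> b * (2 * (z - a))" using True assms(2) by (intro mult_left_mono) auto
  moreover have "a * z \<le> a * (2 * (n - (a + b)))" using assms by (intro mult_left_mono) auto
  ultimately have "z * (a + b) \<le> 2 * (a * (n - (a + b)) + b * (z - a))"
    by (simp add: algebra_simps)
  thus ?thesis by simp
next
  case False
  have "z * (a + b) \<le> (2 * a) * (n / 2)"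
    using False assms by (intro mult_mono) auto
  also have "\<dots> = a * n" by simp
  also have "\<dots> \<le> a * (2 * (n - (a + b)))" using assms by (intro mult_left_mono) auto
  finally have "z * (a + b) \<le> 2 * (a * (n - (a + b)))" by (simp add: algebra_simps)
  moreover have "0 \<le> b * (z - a)" using assms by simp
  ultimately show ?thesis by simp
qed

lemma card_grp_center_half_le_boundary_ratio:
  assumes "finite (carrier G)" "S \<subseteq> carrier G" "0 < card S"
    and "real (card S) \<le> real (card (carrier G)) / 2"
  shows "real (card (grp_center G)) / 2
         \<le> real (card (edge_boundary (commuting_graph_edges G) S)) / real (card S)"
proof -
  let ?Z = "grp_center G" and ?V = "carrier G"
  define a where "a = card (S \<inter> ?Z)"
  define b where "b = card (S - ?Z)"
  have fS: "finite S" and fZ: "finite ?Z"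
    using assms(1,2) grp_center_subset_carrier[of G] finite_subset by blast+
  have ab: "card S = a + b" unfolding a_def b_def using fS by (simp add: card_Int_Diff)
  have "card (?V - S) = card ?V - (a + b)" using card_Diff_subset[OF fS assms(2)] ab by simp
  moreover have "card (?Z - S) = card ?Z - a"
    unfolding a_def using fZ by (metis card_Diff_subset_Int finite_Int inf_commute)
  moreover have aZ: "a \<le> card ?Z" unfolding a_def using fZ by (intro card_mono) auto
  moreover have "a + b \<le> card ?V" using assms(4) ab by linarith
  ultimately have "real a * (real (card ?V) - (real a + real b)) + real b * (real (card ?Z) - real a)
                   \<le> real (card (edge_boundary (commuting_graph_edges G) S))"
    using card_edge_boundary_ge[OF assms(1,2)] unfolding a_def[symmetric] b_def[symmetric]
    by (simp flip: of_nat_add of_nat_mult of_nat_diff)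
  moreover have "real (card ?Z) * (real a + real b) / 2
      \<le> real a * (real (card ?V) - (real a + real b)) + real b * (real (card ?Z) - real a)"
    using aZ card_mono[OF assms(1) grp_center_subset_carrier[of G]] assms(4) ab
    by (intro half_center_le_cut_count) auto
  ultimately have "real (card ?Z) * real (card S) / 2
                   \<le> real (card (edge_boundary (commuting_graph_edges G) S))"
    using ab by simp
  thus ?thesis using assms(3) by (simp add: pos_le_divide_eq)
qed

lemma con_condition_commuting_mem_grp_centralizer:
  assumes "con_condition G" "u \<in> carrier G - grp_center G"
    and "x \<in> grp_centralizer G u - grp_center G" "y \<in> carrier G - grp_center G"
    and "x \<otimes>\<^bsub>G\<^esub> y = y \<otimes>\<^bsub>G\<^esub> x"
  shows "y \<in> grp_centralizer G u"
proof -
  have "u \<in> grp_centralizer G x \<inter> grp_centralizer G u"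
    using assms(2,3) by (auto simp: grp_centralizer_def)
  hence "grp_centralizer G x = grp_centralizer G u"
    using assms(1-3) grp_centralizer_subset_carrier[of G u] unfolding con_condition_def by blast
  moreover have "y \<in> grp_centralizer G x" using assms(4,5) by (auto simp: grp_centralizer_def)
  ultimately show ?thesis by simp
qed

lemma card_edge_boundary_centralizer_le:
  assumes "finite (carrier G)" "con_condition G" "u \<in> carrier G - grp_center G"
  defines "S \<equiv> grp_centralizer G u - grp_center G"
  shows "card (edge_boundary (commuting_graph_edges G) S) \<le> card S * card (grp_center G)"
proof -
  let ?Z = "grp_center G"
  have fS: "finite S" and fZ: "finite ?Z"
    unfolding S_def using assms(1) grp_center_subset_carrier[of G] grp_centralizer_subset_carrier[of G u]
    by (blast intro: finite_subset)+
  have outside: "y \<in> ?Z" if "x \<in> S" "y \<in> carrier G - S" "x \<otimes>\<^bsub>G\<^esub> y = y \<otimes>\<^bsub>G\<^esub> x" for x y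
    using that con_condition_commuting_mem_grp_centralizer[OF assms(2,3)] unfolding S_def by blast
  have "edge_boundary (commuting_graph_edges G) S \<subseteq> (\<lambda>(x, y). {x, y}) ` (S \<times> ?Z)"
  proof
    fix e assume e: "e \<in> edge_boundary (commuting_graph_edges G) S"
    then obtain p q where pq: "e = {p, q}" "p \<in> carrier G" "q \<in> carrier G" "p \<noteq> q"
        "p \<otimes>\<^bsub>G\<^esub> q = q \<otimes>\<^bsub>G\<^esub> p"
      by (auto simp: edge_boundary_def commuting_graph_edges_def)
    have "card ({p, q} \<inter> S) = 1" using e pq(1) by (simp add: edge_boundary_def)
    hence "p \<in> S \<and> q \<notin> S \<or> q \<in> S \<and> p \<notin> S" using pq(4)
      by (cases "p \<in> S"; cases "q \<in> S") (auto simp: Int_insert_left)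
    thus "e \<in> (\<lambda>(x, y). {x, y}) ` (S \<times> ?Z)"
      using outside[of p q] outside[of q p] pq by (auto simp: insert_commute)
  qed
  hence "card (edge_boundary (commuting_graph_edges G) S) \<le> card (S \<times> ?Z)"
    using fS fZ by (meson card_image_le card_mono finite_SigmaI finite_imageI order_trans)
  thus ?thesis by (simp add: card_cartesian_product)
qed

lemma finite_boundary_ratios:
  assumes "finite V"
  shows "finite {real (card (edge_boundary E S)) / real (card S) | S.
                   S \<subseteq> V \<and> 0 < card S \<and> real (card S) \<le> real (card V) / 2}"
proof -
  have "{real (card (edge_boundary E S)) / real (card S) | S.
          S \<subseteq> V \<and> 0 < card S \<and> real (card S) \<le> real (card V) / 2}
        \<subseteq> (\<lambda>S. real (card (edge_boundary E S)) / real (card S)) ` Pow V"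
    by auto
  thus ?thesis using assms by (auto intro: finite_subset)
qed

lemma isoperimetric_number_le:
  assumes "finite V" "S \<subseteq> V" "0 < card S" "real (card S) \<le> real (card V) / 2"
  shows "isoperimetric_number V E \<le> real (card (edge_boundary E S)) / real (card S)"
  unfolding isoperimetric_number_def
  using assms by (intro Min_le finite_boundary_ratios) auto

lemma isoperimetric_number_ge:
  assumes "finite V" "S \<subseteq> V" "0 < card S" "real (card S) \<le> real (card V) / 2"
    and "\<And>T. \<lbrakk>T \<subseteq> V; 0 < card T; real (card T) \<le> real (card V) / 2\<rbrakk>
               \<Longrightarrow> c \<le> real (card (edge_boundary E T)) / real (card T)"
  shows "c \<le> isoperimetric_number V E"
  unfolding isoperimetric_number_def
  using assms by (subst Min_ge_iff) (auto intro: finite_boundary_ratios)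

lemma le_sqrt_mul_diff:
  fixes z m :: real
  assumes "0 \<le> z" "z \<le> m"
  shows "z \<le> sqrt (z * (2 * m - z))"
  using assms by (intro real_le_rsqrt) (simp add: power2_eq_square mult_left_mono)

theorem proposition3p6:
  fixes G :: "('a, 'b) monoid_scheme"
  assumes "group G"
    and "finite (carrier G)"
    and "\<not> comm_group G"
    and "con_condition G"
  shows "real (card (grp_center G)) / 2
           \<le> isoperimetric_number (carrier G) (commuting_graph_edges G)
       \<and> isoperimetric_number (carrier G) (commuting_graph_edges G)
           \<le> sqrt (real (card (grp_center G)) *
                   (2 * (real (card (carrier G)) - 1) - real (card (grp_center G))))"
proof -
  let ?Z = "grp_center G" and ?V = "carrier G" and ?E = "commuting_graph_edges G"
  obtain u where u: "u \<in> ?V - ?Z" using grp_center_psubset_carrier[OF assms(1,3)] by blast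
  define S where "S = grp_centralizer G u - ?Z"
  have S: "S \<subseteq> ?V" "0 < card S" "real (card S) \<le> real (card ?V) / 2"
    using grp_centralizer_subset_carrier[of G u] card_grp_centralizer_diff_center[OF assms(1,2) u]
    unfolding S_def by auto
  have "isoperimetric_number ?V ?E \<le> real (card (edge_boundary ?E S)) / real (card S)"
    by (rule isoperimetric_number_le[OF assms(2) S])
  also have "\<dots> \<le> real (card ?Z)"
    using card_edge_boundary_centralizer_le[OF assms(2,4) u] S(2)
    by (simp add: S_def divide_le_eq mult.commute flip: of_nat_mult)
  also have "\<dots> \<le> sqrt (real (card ?Z) * (2 * (real (card ?V) - 1) - real (card ?Z)))"
    using psubset_card_mono[OF assms(2) grp_center_psubset_carrier[OF assms(1,3)]]
    by (intro le_sqrt_mul_diff) auto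
  finally show ?thesis
    using isoperimetric_number_ge[OF assms(2) S] card_grp_center_half_le_boundary_ratio[OF assms(2)]
    by blast
qed

end
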